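(* Let $a,b,c,f\in C^\infty(\mathbb R)$, $K_1=uu_x$, $K_3=a(u)u_{xxx}+b(u)u_{xx}u_x+c(u)u_x^3$ and $Q_1=f(u)u_x$. Then $Q_3=g_1u_{xxx}+g_2u_{xx}u_x+g_3u_x^3\in\mathcal D_3$ with $$g_1=af',\qquad g_2=bf'+2af'',\qquad g_3=cf'+\tfrac12 bf''+\tfrac12 af'''$$ satisfies $K_1'[Q_3]-Q_3'[K_1]=Q_1'[K_3]-K_3'[Q_1]$, and it is the unique element of $\mathcal D_3$ doing so. Equivalently, $u_\tau=Q_1+\hbar^2Q_3$ commutes with $u_t=K_1+\hbar^2K_3$ up to terms of order $\hbar^4$.
   Context: $u_k=\partial_x^ku$; $\mathcal D=C^\infty(\mathbb R)[u_1,u_2,\dots]$ (coefficients smooth functions of $u$), graded by $\deg u_k=k$, coefficients of degree $0$; $\mathcal D_k$ is the span of degree-$k$ monomials. Total derivative $D=\sum_{r\ge0}u_{r+1}\partial/\partial u_r$ ($u_0=u$); Fréchet derivative $P'[V]=\sum_{r\ge0}\frac{\partial P}{\partial u_r}D^rV$. Primes on $a,b,c,f$ denote derivatives with respect to $u$. *)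

theory Defs
  imports "HOL-Analysis.Analysis"
begin

text \<open>Jet coordinates: a point of jet space is j :: nat => real with j k = u_k (u_0 = u).
  A differential function is a map (nat => real) => real.\<close>

type_synonym jet = "nat \<Rightarrow> real"
type_synonym difffun = "jet \<Rightarrow> real"

definition smooth :: "(real \<Rightarrow> real) \<Rightarrow> bool" where
  "smooth f \<longleftrightarrow> (\<forall>n x. ((deriv ^^ n) f) differentiable (at x))"

definition pder :: "nat \<Rightarrow> difffun \<Rightarrow> difffun" where
  "pder r P = (\<lambda>j. deriv (\<lambda>t. P (j(r := t))) (j r))"

definition totD :: "difffun \<Rightarrow> difffun" where
  "totD P = (\<lambda>j. \<Sum>r. j (Suc r) * pder r P j)"

definition frechet :: "difffun \<Rightarrow> difffun \<Rightarrow> difffun" where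
  "frechet P V = (\<lambda>j. \<Sum>r. pder r P j * (totD ^^ r) V j)"

definition D3 :: "difffun set" where
  "D3 = {P. \<exists>g1 g2 g3. smooth g1 \<and> smooth g2 \<and> smooth g3 \<and>
          P = (\<lambda>j. g1 (j 0) * j 3 + g2 (j 0) * j 2 * j 1 + g3 (j 0) * (j 1)^3)}"

end

theory Submission
  imports Defs
begin

(* Write elements of D_1 and D_3 as f(u) u_1 and g1 u_3 + g2 u_2 u_1 + g3 u_1^3.  A direct jet
   computation shows that for f with three derivatives and arbitrary g the bracket
   [P, Q] = P'[Q] - Q'[P] of the two is
     W(f' g1, f' g2 + 2 f'' g1, f' g3 + f'' g2/2 + f''' g1/2),
   where W(h1, h2, h3) = -3 h1 (u_1 u_3 + u_2^2) - 3 h2 u_1^2 u_2 - 2 h3 u_1^4.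
   As K1 = u u_1 is the case f = id, the bracket of K1 with the element of D_3 with coefficients h
   is W(h), whereas the bracket of Q1 with K3 is W(g1, g2, g3).  Evaluating W at jets with u_1 = 1
   recovers h, which gives existence and uniqueness at once. *)

definition differentiable_upto :: "nat \<Rightarrow> (real \<Rightarrow> real) \<Rightarrow> bool" where
  "differentiable_upto n f \<longleftrightarrow> (\<forall>k<n. \<forall>x. (deriv ^^ k) f differentiable (at x))"

lemma smooth_iff_differentiable_upto: "smooth f \<longleftrightarrow> (\<forall>n. differentiable_upto n f)"
  unfolding smooth_def differentiable_upto_def by (meson lessI)

lemma differentiable_upto_Suc:
  "differentiable_upto (Suc n) f \<longleftrightarrow> (\<forall>x. f differentiable (at x)) \<and> differentiable_upto n (deriv f)"
  unfolding differentiable_upto_def All_less_Suc2 funpow_Suc_right by simp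

lemma differentiable_upto_SucD: "differentiable_upto (Suc n) f \<Longrightarrow> differentiable_upto n f"
  unfolding differentiable_upto_def by simp

lemma deriv_add_real:
  fixes f g :: "real \<Rightarrow> real"
  assumes "f differentiable (at x)" "g differentiable (at x)"
  shows "deriv (\<lambda>x. f x + g x) x = deriv f x + deriv g x"
  using assms unfolding DERIV_deriv_iff_real_differentiable[symmetric]
  by (intro DERIV_imp_deriv derivative_intros)

lemma deriv_mult_real:
  fixes f g :: "real \<Rightarrow> real"
  assumes "f differentiable (at x)" "g differentiable (at x)"
  shows "deriv (\<lambda>x. f x * g x) x = deriv f x * g x + f x * deriv g x"
  using assms unfolding DERIV_deriv_iff_real_differentiable[symmetric]
  by (intro DERIV_imp_deriv derivative_eq_intros) auto

lemma differentiable_upto_const: "differentiable_upto n (\<lambda>x. c)"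
  by (induction n arbitrary: c) (simp_all add: differentiable_upto_Suc differentiable_upto_def[of 0])

lemma differentiable_upto_add:
  "differentiable_upto n f \<Longrightarrow> differentiable_upto n g \<Longrightarrow> differentiable_upto n (\<lambda>x. f x + g x)"
proof (induction n arbitrary: f g)
  case (Suc n)
  then have "deriv (\<lambda>x. f x + g x) = (\<lambda>x. deriv f x + deriv g x)"
    by (auto simp: differentiable_upto_Suc deriv_add_real)
  with Suc show ?case by (simp add: differentiable_upto_Suc)
qed (simp add: differentiable_upto_def)

lemma differentiable_upto_mult:
  "differentiable_upto n f \<Longrightarrow> differentiable_upto n g \<Longrightarrow> differentiable_upto n (\<lambda>x. f x * g x)"
proof (induction n arbitrary: f g)
  case (Suc n)
  then have "deriv (\<lambda>x. f x * g x) = (\<lambda>x. deriv f x * g x + f x * deriv g x)"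
    by (auto simp: differentiable_upto_Suc deriv_mult_real)
  with Suc show ?case
    by (auto simp: differentiable_upto_Suc differentiable_upto_SucD intro!: differentiable_upto_add)
qed (simp add: differentiable_upto_def)

lemma smooth_const: "smooth (\<lambda>x. c)"
  by (simp add: smooth_iff_differentiable_upto differentiable_upto_const)

lemma smooth_add: "smooth f \<Longrightarrow> smooth g \<Longrightarrow> smooth (\<lambda>x. f x + g x)"
  by (simp add: smooth_iff_differentiable_upto differentiable_upto_add)

lemma smooth_mult: "smooth f \<Longrightarrow> smooth g \<Longrightarrow> smooth (\<lambda>x. f x * g x)"
  by (simp add: smooth_iff_differentiable_upto differentiable_upto_mult)

lemma smooth_deriv: "smooth f \<Longrightarrow> smooth (deriv f)"
  by (meson differentiable_upto_Suc smooth_iff_differentiable_upto)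

lemma smooth_has_real_derivative: "smooth f \<Longrightarrow> (f has_real_derivative deriv f x) (at x)"
  by (metis DERIV_deriv_iff_real_differentiable differentiable_upto_Suc smooth_iff_differentiable_upto)

definition depends_below :: "nat \<Rightarrow> difffun \<Rightarrow> bool" where
  "depends_below N P \<longleftrightarrow> (\<forall>r\<ge>N. \<forall>j t. P (j(r := t)) = P j)"

lemma pder_eqI:
  assumes "\<And>j. ((\<lambda>t. P (j(r := t))) has_real_derivative P' j) (at (j r))"
  shows "pder r P = P'"
  unfolding pder_def using assms by (auto intro!: ext DERIV_imp_deriv)

lemma pder_eq_0: "depends_below N P \<Longrightarrow> N \<le> r \<Longrightarrow> pder r P = (\<lambda>j. 0)"
  unfolding depends_below_def by (intro pder_eqI) simp

lemma totD_eq_sum: "depends_below N P \<Longrightarrow> totD P = (\<lambda>j. \<Sum>r<N. j (Suc r) * pder r P j)"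
  unfolding totD_def by (intro ext suminf_finite) (auto simp: pder_eq_0)

lemma frechet_eq_sum:
  "depends_below N P \<Longrightarrow> frechet P V = (\<lambda>j. \<Sum>r<N. pder r P j * (totD ^^ r) V j)"
  unfolding frechet_def by (intro ext suminf_finite) (auto simp: pder_eq_0)

lemma lessThan_one: "{..<1::nat} = {0}"
  by auto

lemma funpow_one: "((f :: 'a \<Rightarrow> 'a) ^^ 1) x = f x"
  by (simp add: funpow_Suc_right)

definition frechet_bracket :: "difffun \<Rightarrow> difffun \<Rightarrow> difffun" where
  "frechet_bracket P Q = (\<lambda>j. frechet P Q j - frechet Q P j)"

definition deg1 :: "(real \<Rightarrow> real) \<Rightarrow> difffun" where
  "deg1 f = (\<lambda>j. f (j 0) * j 1)"

definition deg3 :: "(real \<Rightarrow> real) \<Rightarrow> (real \<Rightarrow> real) \<Rightarrow> (real \<Rightarrow> real) \<Rightarrow> difffun" where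
  "deg3 g1 g2 g3 = (\<lambda>j. g1 (j 0) * j 3 + g2 (j 0) * j 2 * j 1 + g3 (j 0) * (j 1)^3)"

definition bracket_form :: "(real \<Rightarrow> real) \<Rightarrow> (real \<Rightarrow> real) \<Rightarrow> (real \<Rightarrow> real) \<Rightarrow> difffun" where
  "bracket_form h1 h2 h3 = (\<lambda>j. - 3 * h1 (j 0) * (j 1 * j 3 + (j 2)^2)
     - 3 * h2 (j 0) * (j 1)^2 * j 2 - 2 * h3 (j 0) * (j 1)^4)"

lemma D3_eq: "D3 = {deg3 g1 g2 g3 | g1 g2 g3. smooth g1 \<and> smooth g2 \<and> smooth g3}"
  unfolding D3_def deg3_def by blast

lemma depends_below_deg3: "depends_below 4 (deg3 g1 g2 g3)"
  by (simp add: depends_below_def deg3_def)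

lemma pder_deg3:
  "pder 1 (deg3 g1 g2 g3) = (\<lambda>j. g2 (j 0) * j 2 + 3 * g3 (j 0) * (j 1)^2)"
  "pder 2 (deg3 g1 g2 g3) = (\<lambda>j. g2 (j 0) * j 1)"
  "pder 3 (deg3 g1 g2 g3) = (\<lambda>j. g1 (j 0))"
  by (rule pder_eqI; auto simp: deg3_def intro!: derivative_eq_intros)+

lemma totD_deg3:
  "totD (deg3 g1 g2 g3) = (\<lambda>j. j 1 * pder 0 (deg3 g1 g2 g3) j
     + j 2 * (g2 (j 0) * j 2 + 3 * g3 (j 0) * (j 1)^2) + j 3 * g2 (j 0) * j 1 + j 4 * g1 (j 0))"
  by (simp add: totD_eq_sum[OF depends_below_deg3] pder_deg3 lessThan_nat_numeral lessThan_one
      algebra_simps flip: One_nat_def)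

lemma frechet_deg3:
  "frechet (deg3 g1 g2 g3) V = (\<lambda>j. pder 0 (deg3 g1 g2 g3) j * V j
     + (g2 (j 0) * j 2 + 3 * g3 (j 0) * (j 1)^2) * totD V j
     + g2 (j 0) * j 1 * (totD ^^ 2) V j + g1 (j 0) * (totD ^^ 3) V j)"
  by (simp add: frechet_eq_sum[OF depends_below_deg3] pder_deg3 lessThan_nat_numeral lessThan_one
      funpow_one algebra_simps flip: One_nat_def)

context
  fixes f f1 f2 f3 :: "real \<Rightarrow> real"
  assumes deriv_f: "\<And>x. (f has_real_derivative f1 x) (at x)"
      and deriv_f1: "\<And>x. (f1 has_real_derivative f2 x) (at x)"
      and deriv_f2: "\<And>x. (f2 has_real_derivative f3 x) (at x)"
begin

lemma pder_deg1:
  "pder 0 (deg1 f) = (\<lambda>j. f1 (j 0) * j 1)"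
  "pder 1 (deg1 f) = (\<lambda>j. f (j 0))"
  by (rule pder_eqI; auto simp: deg1_def intro!: derivative_eq_intros deriv_f)+

lemma depends_below_deg1: "depends_below 2 (deg1 f)"
  by (simp add: depends_below_def deg1_def)

lemma frechet_deg1: "frechet (deg1 f) V = (\<lambda>j. f1 (j 0) * j 1 * V j + f (j 0) * totD V j)"
  by (simp add: frechet_eq_sum[OF depends_below_deg1] pder_deg1 lessThan_nat_numeral lessThan_one
      funpow_one algebra_simps flip: One_nat_def)

lemma totD_deg1: "totD (deg1 f) = (\<lambda>j. f1 (j 0) * (j 1)^2 + f (j 0) * j 2)"
  by (simp add: totD_eq_sum[OF depends_below_deg1] pder_deg1 lessThan_nat_numeral lessThan_one
      power2_eq_square algebra_simps flip: One_nat_def)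

lemma totD2_deg1:
  "(totD ^^ 2) (deg1 f) = (\<lambda>j. f2 (j 0) * (j 1)^3 + 3 * f1 (j 0) * j 1 * j 2 + f (j 0) * j 3)"
proof -
  let ?P = "\<lambda>j::jet. f1 (j 0) * (j 1)^2 + f (j 0) * j 2"
  have "depends_below 3 ?P"
    by (simp add: depends_below_def)
  moreover have "pder 0 ?P = (\<lambda>j. f2 (j 0) * (j 1)^2 + f1 (j 0) * j 2)"
    by (rule pder_eqI) (auto intro!: derivative_eq_intros deriv_f deriv_f1)
  moreover have "pder 1 ?P = (\<lambda>j. 2 * f1 (j 0) * j 1)"
    by (rule pder_eqI) (auto intro!: derivative_eq_intros)
  moreover have "pder 2 ?P = (\<lambda>j. f (j 0))"
    by (rule pder_eqI) (auto intro!: derivative_eq_intros)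
  ultimately have "totD ?P = (\<lambda>j. f2 (j 0) * (j 1)^3 + 3 * f1 (j 0) * j 1 * j 2 + f (j 0) * j 3)"
    by (simp add: totD_eq_sum lessThan_nat_numeral lessThan_one power2_eq_square power3_eq_cube
        algebra_simps flip: One_nat_def)
  moreover have "(totD ^^ 2) (deg1 f) = totD ?P"
    by (simp add: numeral_2_eq_2 totD_deg1)
  ultimately show ?thesis
    by simp
qed

lemma totD3_deg1:
  "(totD ^^ 3) (deg1 f) = (\<lambda>j. f3 (j 0) * (j 1)^4 + 6 * f2 (j 0) * (j 1)^2 * j 2
     + 3 * f1 (j 0) * (j 2)^2 + 4 * f1 (j 0) * j 1 * j 3 + f (j 0) * j 4)"
proof -
  let ?P = "\<lambda>j::jet. f2 (j 0) * (j 1)^3 + 3 * f1 (j 0) * j 1 * j 2 + f (j 0) * j 3"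
  have "depends_below 4 ?P"
    by (simp add: depends_below_def)
  moreover have "pder 0 ?P = (\<lambda>j. f3 (j 0) * (j 1)^3 + 3 * f2 (j 0) * j 1 * j 2 + f1 (j 0) * j 3)"
    by (rule pder_eqI) (auto intro!: derivative_eq_intros deriv_f deriv_f1 deriv_f2)
  moreover have "pder 1 ?P = (\<lambda>j. 3 * f2 (j 0) * (j 1)^2 + 3 * f1 (j 0) * j 2)"
    by (rule pder_eqI) (auto intro!: derivative_eq_intros simp: power2_eq_square)
  moreover have "pder 2 ?P = (\<lambda>j. 3 * f1 (j 0) * j 1)"
    by (rule pder_eqI) (auto intro!: derivative_eq_intros)
  moreover have "pder 3 ?P = (\<lambda>j. f (j 0))"
    by (rule pder_eqI) (auto intro!: derivative_eq_intros)
  ultimately have "totD ?P = (\<lambda>j. f3 (j 0) * (j 1)^4 + 6 * f2 (j 0) * (j 1)^2 * j 2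
     + 3 * f1 (j 0) * (j 2)^2 + 4 * f1 (j 0) * j 1 * j 3 + f (j 0) * j 4)"
    by (simp add: totD_eq_sum lessThan_nat_numeral lessThan_one power2_eq_square power3_eq_cube
        power4_eq_xxxx algebra_simps flip: One_nat_def)
  moreover have "(totD ^^ 3) (deg1 f) = totD ((totD ^^ 2) (deg1 f))"
    by (simp add: numeral_3_eq_3 numeral_2_eq_2)
  ultimately show ?thesis
    by (simp only: totD2_deg1)
qed

(* The terms carrying the u-derivatives of g1, g2, g3 appear in both Frechet derivatives as
   pder 0 (deg3 g1 g2 g3) and cancel, so no regularity of g is needed. *)
lemma frechet_bracket_deg1_deg3:
  "frechet_bracket (deg1 f) (deg3 g1 g2 g3) =
     bracket_form (\<lambda>x. f1 x * g1 x) (\<lambda>x. f1 x * g2 x + 2 * f2 x * g1 x)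
       (\<lambda>x. f1 x * g3 x + f2 x * g2 x / 2 + f3 x * g1 x / 2)"
  unfolding frechet_bracket_def frechet_deg1 frechet_deg3
    totD_deg3 totD_deg1 totD2_deg1 totD3_deg1
  by (simp add: fun_eq_iff bracket_form_def deg1_def deg3_def algebra_simps
      power2_eq_square power3_eq_cube power4_eq_xxxx)

end

lemma frechet_bracket_id_deg3:
  "frechet_bracket (deg1 (\<lambda>x. x)) (deg3 g1 g2 g3) = bracket_form g1 g2 g3"
  using frechet_bracket_deg1_deg3[of "\<lambda>x. x" "\<lambda>_. 1" "\<lambda>_. 0" "\<lambda>_. 0"]
  by (simp add: DERIV_ident DERIV_const)

lemma bracket_form_inject:
  assumes "bracket_form h1 h2 h3 = bracket_form k1 k2 k3"
  shows "h1 = k1 \<and> h2 = k2 \<and> h3 = k3"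
proof -
  define J where
    "J x p q = (\<lambda>i::nat. if i = 0 then x else if i = 1 then 1 else if i = 2 then p else q)"
    for x p q :: real
  have eq: "3 * h1 x * (q + p^2) + 3 * h2 x * p + 2 * h3 x
      = 3 * k1 x * (q + p^2) + 3 * k2 x * p + 2 * k3 x" for x p q
    using fun_cong[OF assms, of "J x p q"] by (simp add: bracket_form_def J_def)
  have h3: "h3 x = k3 x" for x
    using eq[where p = 0 and q = 0] by simp
  moreover have h1: "h1 x = k1 x" for x
    using eq[where p = 0 and q = 1] h3 by simp
  moreover have "h2 x = k2 x" for x
    using eq[where p = 1 and q = "-1"] h1 h3 by simp
  ultimately show ?thesis
    by auto
qed

theorem mainTheorem2:
  fixes a b c f :: "real \<Rightarrow> real"
  assumes "smooth a" "smooth b" "smooth c" "smooth f"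
  defines "K1 \<equiv> (\<lambda>j. j 0 * j 1)"
      and "K3 \<equiv> (\<lambda>j. a (j 0) * j 3 + b (j 0) * j 2 * j 1 + c (j 0) * (j 1)^3)"
      and "Q1 \<equiv> (\<lambda>j. f (j 0) * j 1)"
      and "Q3 \<equiv> (\<lambda>j. a (j 0) * deriv f (j 0) * j 3
              + (b (j 0) * deriv f (j 0) + 2 * a (j 0) * (deriv ^^ 2) f (j 0)) * j 2 * j 1
              + (c (j 0) * deriv f (j 0) + 1/2 * b (j 0) * (deriv ^^ 2) f (j 0)
                 + 1/2 * a (j 0) * (deriv ^^ 3) f (j 0)) * (j 1)^3)"
  shows "Q3 \<in> D3
     \<and> (\<lambda>j. frechet K1 Q3 j - frechet Q3 K1 j) = (\<lambda>j. frechet Q1 K3 j - frechet K3 Q1 j)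
     \<and> (\<forall>Q\<in>D3. (\<lambda>j. frechet K1 Q j - frechet Q K1 j) = (\<lambda>j. frechet Q1 K3 j - frechet K3 Q1 j)
                 \<longrightarrow> Q = Q3)"
proof -
  let ?f1 = "deriv f" and ?f2 = "deriv (deriv f)" and ?f3 = "deriv (deriv (deriv f))"
  define q1 where "q1 x = ?f1 x * a x" for x
  define q2 where "q2 x = ?f1 x * b x + 2 * ?f2 x * a x" for x
  define q3 where "q3 x = ?f1 x * c x + ?f2 x * b x / 2 + ?f3 x * a x / 2" for x
  have K1: "K1 = deg1 (\<lambda>x. x)" and K3: "K3 = deg3 a b c" and Q1: "Q1 = deg1 f"
    and Q3: "Q3 = deg3 q1 q2 q3"
    by (auto simp: K1_def K3_def Q1_def Q3_def deg1_def deg3_def q1_def q2_def q3_def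
        eval_nat_numeral algebra_simps)
  have "smooth q1" "smooth q2" "smooth q3"
    unfolding q1_def q2_def q3_def divide_inverse
    by (intro smooth_add smooth_mult smooth_const smooth_deriv assms)+
  then have "Q3 \<in> D3"
    unfolding D3_eq Q3 by blast
  moreover have "frechet_bracket Q1 K3 = bracket_form q1 q2 q3"
    unfolding Q1 K3 q1_def q2_def q3_def
    by (intro frechet_bracket_deg1_deg3 smooth_has_real_derivative smooth_deriv assms)
  ultimately show ?thesis
    unfolding frechet_bracket_def[symmetric] D3_eq K1 Q3
    by (auto simp: frechet_bracket_id_deg3 dest: bracket_form_inject)
qed

end
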